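(* Let $K>1$, $\mathcal{Y}=\{1,\dots,K\}$, $(X,Y,M)$ distributed on $\mathcal{X}\times\mathcal{Y}\times\mathcal{Y}$, and let $\bm{g}:\mathcal{X}\to\mathbb{R}^{K+1}$ be measurable with classifier part $\bm{g}_{\rm class}=(g_1,\dots,g_K)$. Then $$\max\Big(R_{01}(\bm{g}_{\rm class})-R_{01}^*,\ R^{\bot}_{01}(\bm{g})-R^{\bot*}_{01}\Big)\le\sqrt{2\big(R_{L_{\tilde{\psi}}}(\bm{g})-R^*_{L_{\tilde{\psi}}}\big)}.$$
   Context: Asymmetric softmax: $\tilde{\psi}_y(\bm{u})=\exp(u_y)/\sum_{y'=1}^K\exp(u_{y'})$ for $y\le K$, $\tilde{\psi}_{K+1}(\bm{u})=\exp(u_{K+1})/(\sum_{y'=1}^{K+1}\exp(u_{y'})-\max_{y'\le K}\exp(u_{y'}))$. Surrogate $L_{\tilde{\psi}}(\bm{u},y,m)=-\log\tilde{\psi}_y(\bm{u})-[\![m\ne y]\!]\log(1-\tilde{\psi}_{K+1}(\bm{u}))-[\![m=y]\!]\log\tilde{\psi}_{K+1}(\bm{u})$, $R_{L_{\tilde{\psi}}}(\bm{g})=\mathbb{E}[L_{\tilde{\psi}}(\bm{g}(X),Y,M)]$ and $R^*_{L_{\tilde{\psi}}}$ its infimum over measurable $\bm{g}$. $R_{01}(\bm{g}_{\rm class})=\Pr(\mathop{\rm argmax}_{y\le K}g_y(X)\ne Y)$ and $R^*_{01}$ is the Bayes (minimal) misclassification error. The 0-1-deferral loss is $\ell^{\bot}_{01}(f(\bm{x}),y,m)=[\![f(\bm{x})\in\mathcal{Y},\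 f(\bm{x})\ne y]\!]+[\![f(\bm{x})=\bot,\ m\ne y]\!]$; $R^{\bot}_{01}(\bm{g})=\mathbb{E}[\ell^{\bot}_{01}(\varphi(\bm{g}(X)),Y,M)]$ where $\varphi(\bm{u})=\bot$ if $u_{K+1}>\max_{y\le K}u_y$ and $\varphi(\bm{u})=\mathop{\rm argmax}_{y\le K}u_y$ otherwise; $R^{\bot*}_{01}$ is the infimum of the 0-1-deferral risk over all $f:\mathcal{X}\to\mathcal{Y}\cup\{\bot\}$. *)

theory Defs
  imports "HOL-Probability.Probability"
begin

text \<open>Labels are 1..K; a score vector u :: nat => real uses indices 1..K+1.
  Deferral (bottom) is encoded as None in the type nat option.\<close>

definition psi_t :: "nat \<Rightarrow> (nat \<Rightarrow> real) \<Rightarrow> nat \<Rightarrow> real" where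
  "psi_t K u y =
     (if y = K + 1 then
        exp (u (K+1)) / ((\<Sum>y'=1..K+1. exp (u y')) - Max ((\<lambda>y'. exp (u y')) ` {1..K}))
      else exp (u y) / (\<Sum>y'=1..K. exp (u y')))"

definition L_psi :: "nat \<Rightarrow> (nat \<Rightarrow> real) \<Rightarrow> nat \<Rightarrow> nat \<Rightarrow> real" where
  "L_psi K u y m =
     - ln (psi_t K u y)
     - (if m \<noteq> y then ln (1 - psi_t K u (K+1)) else 0)
     - (if m = y then ln (psi_t K u (K+1)) else 0)"

definition argmaxK :: "nat \<Rightarrow> (nat \<Rightarrow> real) \<Rightarrow> nat" where
  "argmaxK K u = (LEAST y. y \<in> {1..K} \<and> (\<forall>y'\<in>{1..K}. u y' \<le> u y))"

definition phi :: "nat \<Rightarrow> (nat \<Rightarrow> real) \<Rightarrow> nat option" where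
  "phi K u = (if u (K+1) > Max (u ` {1..K}) then None else Some (argmaxK K u))"

definition loss01_defer :: "nat option \<Rightarrow> nat \<Rightarrow> nat \<Rightarrow> real" where
  "loss01_defer f y m =
     (case f of Some c \<Rightarrow> (if c \<noteq> y then 1 else 0)
              | None \<Rightarrow> (if m \<noteq> y then 1 else 0))"

definition meas_scores :: "'a measure \<Rightarrow> nat \<Rightarrow> ('a \<Rightarrow> nat \<Rightarrow> real) set" where
  "meas_scores Xs K = {g. \<forall>j\<in>{1..K+1}. (\<lambda>x. g x j) \<in> borel_measurable Xs}"

definition risk_L :: "('a \<times> nat \<times> nat) measure \<Rightarrow> nat \<Rightarrow> ('a \<Rightarrow> nat \<Rightarrow> real) \<Rightarrow> ennreal" where
  "risk_L D K g = (\<integral>\<^sup>+ (x, y, m). ennreal (L_psi K (g x) y m) \<partial>D)"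

definition risk_L_star :: "'a measure \<Rightarrow> ('a \<times> nat \<times> nat) measure \<Rightarrow> nat \<Rightarrow> ennreal" where
  "risk_L_star Xs D K = (INF g \<in> meas_scores Xs K. risk_L D K g)"

definition risk01 :: "('a \<times> nat \<times> nat) measure \<Rightarrow> ('a \<Rightarrow> nat) \<Rightarrow> real" where
  "risk01 D h = measure D {(x, y, m) \<in> space D. h x \<noteq> y}"

definition risk01_star :: "'a measure \<Rightarrow> ('a \<times> nat \<times> nat) measure \<Rightarrow> nat \<Rightarrow> real" where
  "risk01_star Xs D K = (INF h \<in> Xs \<rightarrow>\<^sub>M count_space {1..K}. risk01 D h)"

definition risk_defer :: "('a \<times> nat \<times> nat) measure \<Rightarrow> ('a \<Rightarrow> nat option) \<Rightarrow> real" where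
  "risk_defer D f = (\<integral> (x, y, m). loss01_defer (f x) y m \<partial>D)"

definition risk_defer_star :: "'a measure \<Rightarrow> ('a \<times> nat \<times> nat) measure \<Rightarrow> nat \<Rightarrow> real" where
  "risk_defer_star Xs D K =
     (INF f \<in> Xs \<rightarrow>\<^sub>M count_space (insert None (Some ` {1..K})). risk_defer D f)"

end

theory Submission
  imports Defs
begin

(* Fix x and write eta for the conditional class probabilities, r = P(M = Y | X = x) for the
   accuracy of the expert and psi for the asymmetric softmax of g(x).  The conditional surrogate
   risk exceeds H(eta) + h(r), the entropy of eta plus the binary entropy of r, by exactly
   KL(eta || psi_1..K) + kl(r || psi_K+1), and H(eta) + h(r) is the infimum over all scores.
   By Pinsker's inequality each deviation |eta_y - psi_y| and |r - psi_K+1| is at most the square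
   root of half this gap.  The argmax and the deferral decision are monotone in psi, so the
   conditional excess 0-1 and 0-1-deferral risks are bounded by sums of two such deviations, hence
   by sqrt (2 * gap).  Integrating over x, with the conditional law of (Y, M) given X obtained from
   Radon-Nikodym derivatives, and applying Jensen's inequality to the concave square root gives
   the theorem. *)

section \<open>Pinsker's inequality\<close>

definition binary_kl :: "real \<Rightarrow> real \<Rightarrow> real" where
  "binary_kl p q = p * (ln p - ln q) + (1 - p) * (ln (1 - p) - ln (1 - q))"

definition kl_div :: "'b set \<Rightarrow> ('b \<Rightarrow> real) \<Rightarrow> ('b \<Rightarrow> real) \<Rightarrow> real" where
  "kl_div A a b = (\<Sum>y\<in>A. a y * (ln (a y) - ln (b y)))"

lemma binary_pinsker_of_le:
  fixes p q :: real
  assumes "0 \<le> p" "p \<le> q" "q < 1"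
  shows "2 * (p - q)\<^sup>2 \<le> binary_kl p q"
proof -
  define F where "F t = binary_kl p t - 2 * (p - t)\<^sup>2" for t
  have "F p \<le> F q"
  proof (rule DERIV_nonneg_imp_increasing_open[OF \<open>p \<le> q\<close>])
    fix t assume t: "p < t" "t < q"
    then have "0 < t" "t < 1" "0 < t * (1 - t)" using assms by auto
    have "(F has_real_derivative (-p/t + (1-p)/(1-t) + 4*(p-t))) (at t)"
      unfolding F_def binary_kl_def using \<open>0 < t\<close> \<open>t < 1\<close> by (auto intro!: derivative_eq_intros)
    moreover have "-p/t + (1-p)/(1-t) + 4*(p-t) = (t - p) * (1 - 2*t)\<^sup>2 / (t * (1 - t))"
      using \<open>0 < t\<close> \<open>t < 1\<close> by (simp add: field_simps power2_eq_square)
    moreover have "0 \<le> (t - p) * (1 - 2*t)\<^sup>2 / (t * (1 - t))"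
      using t \<open>0 < t * (1 - t)\<close> by simp
    ultimately show "\<exists>y. (F has_real_derivative y) (at t) \<and> 0 \<le> y" by auto
  next
    show "continuous_on {p..q} F"
      using assms by (cases "p = 0") (auto simp: F_def binary_kl_def intro!: continuous_intros)
  qed
  then show ?thesis by (simp add: F_def binary_kl_def)
qed

lemma binary_pinsker:
  fixes p q :: real
  assumes "0 \<le> p" "p \<le> 1" "0 < q" "q < 1"
  shows "2 * (p - q)\<^sup>2 \<le> binary_kl p q"
proof (cases "p \<le> q")
  case True
  then show ?thesis using binary_pinsker_of_le assms by blast
next
  case False
  then have "2 * ((1 - p) - (1 - q))\<^sup>2 \<le> binary_kl (1 - p) (1 - q)"
    using assms by (intro binary_pinsker_of_le) auto
  then show ?thesis by (simp add: binary_kl_def power2_commute algebra_simps)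
qed

lemma log_sum_inequality:
  fixes a b :: "'b \<Rightarrow> real"
  assumes "finite A" "A \<noteq> {}" "\<And>y. y \<in> A \<Longrightarrow> 0 \<le> a y" "\<And>y. y \<in> A \<Longrightarrow> 0 < b y"
  shows "sum a A * (ln (sum a A) - ln (sum b A)) \<le> kl_div A a b"
proof (cases "sum a A = 0")
  case True
  then show ?thesis using assms by (simp add: kl_div_def sum_nonneg_eq_0_iff)
next
  case False
  define S Q where "S = sum a A" and "Q = sum b A"
  have "0 < S" using False assms by (simp add: S_def order_less_le sum_nonneg)
  have "0 < Q" using assms by (simp add: Q_def sum_pos)
  have term_bound: "a y - b y * S / Q \<le> a y * (ln (a y) - ln (b y)) - a y * (ln S - ln Q)"
    if "y \<in> A" for y
  proof (cases "a y = 0")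
    case False
    then have "0 < a y" "0 < b y" using assms that by (auto simp: order_less_le)
    define r where "r = a y * Q / (b y * S)"
    have "0 < r" using \<open>0 < a y\<close> \<open>0 < b y\<close> \<open>0 < S\<close> \<open>0 < Q\<close> by (simp add: r_def)
    have "a y * (1 - 1 / r) \<le> a y * ln r"
      using ln_le_minus_one[of "1 / r"] \<open>0 < r\<close> \<open>0 < a y\<close> by (simp add: ln_div)
    moreover have "a y * (1 - 1 / r) = a y - b y * S / Q"
      using \<open>0 < a y\<close> \<open>0 < b y\<close> \<open>0 < S\<close> \<open>0 < Q\<close> by (simp add: r_def field_simps)
    moreover have "ln r = ln (a y) - ln (b y) - (ln S - ln Q)"
      using \<open>0 < a y\<close> \<open>0 < b y\<close> \<open>0 < S\<close> \<open>0 < Q\<close> by (simp add: r_def ln_div ln_mult)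
    ultimately show ?thesis by (simp add: right_diff_distrib)
  qed (use assms(4)[OF that] \<open>0 < S\<close> \<open>0 < Q\<close> in simp)
  have "0 = (\<Sum>y\<in>A. a y - b y * S / Q)"
    using \<open>0 < Q\<close> by (simp add: sum_subtractf S_def Q_def flip: sum_divide_distrib sum_distrib_right)
  also have "\<dots> \<le> (\<Sum>y\<in>A. a y * (ln (a y) - ln (b y)) - a y * (ln S - ln Q))"
    using term_bound by (rule sum_mono)
  also have "\<dots> = kl_div A a b - S * (ln S - ln Q)"
    by (simp add: kl_div_def sum_subtractf S_def flip: sum_distrib_right)
  finally show ?thesis by (simp add: S_def Q_def)
qed

lemma kl_div_ge_coordinate:
  fixes a b :: "'b \<Rightarrow> real"
  assumes "finite A" "c \<in> A"
    and a: "\<And>y. y \<in> A \<Longrightarrow> 0 \<le> a y" "sum a A = 1"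
    and b: "\<And>y. y \<in> A \<Longrightarrow> 0 < b y" "sum b A = 1"
  shows "2 * (a c - b c)\<^sup>2 \<le> kl_div A a b"
proof (cases "A = {c}")
  case True
  then show ?thesis using a b by (simp add: kl_div_def)
next
  case False
  define B where "B = A - {c}"
  have "finite B" "B \<noteq> {}" using assms False by (auto simp: B_def)
  have split: "sum f A = f c + sum f B" for f :: "'b \<Rightarrow> real"
    using assms by (simp add: B_def sum.remove)
  have sum_B: "sum a B = 1 - a c" "sum b B = 1 - b c" using split[of a] split[of b] a b by simp_all
  have "0 < sum b B" using \<open>finite B\<close> \<open>B \<noteq> {}\<close> b by (intro sum_pos) (auto simp: B_def)
  have "0 \<le> sum a B" using a by (intro sum_nonneg) (auto simp: B_def)
  have "2 * (a c - b c)\<^sup>2 \<le> binary_kl (a c) (b c)"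
    using sum_B a b \<open>c \<in> A\<close> \<open>0 < sum b B\<close> \<open>0 \<le> sum a B\<close>
    by (intro binary_pinsker) auto
  also have "\<dots> \<le> a c * (ln (a c) - ln (b c)) + kl_div B a b"
  proof -
    have "sum a B * (ln (sum a B) - ln (sum b B)) \<le> kl_div B a b"
      using \<open>finite B\<close> \<open>B \<noteq> {}\<close> a b by (intro log_sum_inequality) (auto simp: B_def)
    then show ?thesis by (simp add: binary_kl_def sum_B)
  qed
  also have "\<dots> = kl_div A a b"
    using split[of "\<lambda>y. a y * (ln (a y) - ln (b y))"] by (simp add: kl_div_def)
  finally show ?thesis .
qed

lemma abs_add_le_sqrt:
  fixes a b S :: real
  assumes "2 * a\<^sup>2 \<le> S" "2 * b\<^sup>2 \<le> S"
  shows "\<bar>a\<bar> + \<bar>b\<bar> \<le> sqrt (2 * S)"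
proof (rule real_le_rsqrt)
  have "0 \<le> (\<bar>a\<bar> - \<bar>b\<bar>)\<^sup>2" by simp
  then have "(\<bar>a\<bar> + \<bar>b\<bar>)\<^sup>2 \<le> 2 * a\<^sup>2 + 2 * b\<^sup>2" by (simp add: power2_eq_square algebra_simps)
  then show "(\<bar>a\<bar> + \<bar>b\<bar>)\<^sup>2 \<le> 2 * S" using assms by linarith
qed

section \<open>The asymmetric softmax\<close>

lemma
  assumes "1 \<le> K"
  shows argmaxK_mem: "argmaxK K u \<in> {1..K}"
    and argmaxK_ge: "y \<in> {1..K} \<Longrightarrow> u y \<le> u (argmaxK K u)"
proof -
  have "Max (u ` {1..K}) \<in> u ` {1..K}" using assms by (intro Max_in) auto
  then obtain c where "c \<in> {1..K}" "u c = Max (u ` {1..K})" by auto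
  then have "c \<in> {1..K} \<and> (\<forall>y\<in>{1..K}. u y \<le> u c)" by simp
  then have "argmaxK K u \<in> {1..K} \<and> (\<forall>y\<in>{1..K}. u y \<le> u (argmaxK K u))"
    unfolding argmaxK_def by (rule LeastI)
  then show "argmaxK K u \<in> {1..K}" "y \<in> {1..K} \<Longrightarrow> u y \<le> u (argmaxK K u)" by auto
qed

lemma argmaxK_cong:
  assumes "\<And>j. j \<in> {1..K} \<Longrightarrow> u j = v j"
  shows "argmaxK K u = argmaxK K v"
proof -
  have "(y \<in> {1..K} \<and> (\<forall>y'\<in>{1..K}. u y' \<le> u y)) \<longleftrightarrow> (y \<in> {1..K} \<and> (\<forall>y'\<in>{1..K}. v y' \<le> v y))"
    for y using assms by auto
  then show ?thesis unfolding argmaxK_def by simp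
qed

lemma Max_mono_image_eq_argmaxK:
  assumes "mono f" "1 \<le> K"
  shows "Max ((\<lambda>y. f (u y)) ` {1..K}) = f (u (argmaxK K u))"
  using assms argmaxK_mem[OF assms(2)] argmaxK_ge[OF assms(2)] by (intro Max_eqI) (auto simp: mono_def)

lemma phi_eq:
  assumes "1 \<le> K"
  shows "phi K u = (if u (argmaxK K u) < u (K+1) then None else Some (argmaxK K u))"
  using Max_mono_image_eq_argmaxK[of "\<lambda>x. x", OF _ assms] by (simp add: phi_def mono_def)

lemma phi_cong:
  assumes "\<And>j. j \<in> {1..K+1} \<Longrightarrow> u j = v j"
  shows "phi K u = phi K v"
proof -
  have "u ` {1..K} = v ` {1..K}" "u (K+1) = v (K+1)" using assms by (auto intro!: image_cong)
  moreover have "argmaxK K u = argmaxK K v" using assms by (intro argmaxK_cong) auto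
  ultimately show ?thesis by (simp add: phi_def)
qed

lemma psi_t_class: "y \<noteq> K + 1 \<Longrightarrow> psi_t K u y = exp (u y) / (\<Sum>y'=1..K. exp (u y'))"
  by (simp add: psi_t_def)

lemma psi_t_defer:
  assumes "1 \<le> K"
  shows "psi_t K u (K+1) =
    exp (u (K+1)) / (exp (u (K+1)) + (\<Sum>y=1..K. exp (u y)) - exp (u (argmaxK K u)))"
  using Max_mono_image_eq_argmaxK[of exp, OF _ assms] by (simp add: psi_t_def mono_def add.commute)

lemma psi_t_cong:
  assumes "\<And>j. j \<in> {1..K+1} \<Longrightarrow> u j = v j" "y \<in> {1..K+1}"
  shows "psi_t K u y = psi_t K v y"
proof -
  have "(\<Sum>y=1..K+1. exp (u y)) = (\<Sum>y=1..K+1. exp (v y))" "(\<Sum>y=1..K. exp (u y)) = (\<Sum>y=1..K. exp (v y))"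
    "(\<lambda>y. exp (u y)) ` {1..K} = (\<lambda>y. exp (v y)) ` {1..K}"
    using assms(1) by (auto intro!: sum.cong image_cong)
  then show ?thesis using assms by (simp add: psi_t_def)
qed

lemma L_psi_cong:
  "(\<And>j. j \<in> {1..K+1} \<Longrightarrow> u j = v j) \<Longrightarrow> y \<in> {1..K} \<Longrightarrow> L_psi K u y m = L_psi K v y m"
  using psi_t_cong[of K u v y] psi_t_cong[of K u v "K+1"] by (simp add: L_psi_def)

lemma exp_lt_sum_exp:
  fixes K :: nat and u :: "nat \<Rightarrow> real"
  assumes "1 < K" "c \<in> {1..K}"
  shows "exp (u c) < (\<Sum>y=1..K. exp (u y))"
proof -
  have "(if c = 1 then K else 1) \<in> {1..K} - {c}" using assms by auto
  then have "0 < (\<Sum>y\<in>{1..K} - {c}. exp (u y))" by (intro sum_pos) auto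
  then show ?thesis using assms(2) by (simp add: sum.remove)
qed

lemma sum_exp_pos: "1 \<le> K \<Longrightarrow> 0 < (\<Sum>y=1..K. exp ((u :: nat \<Rightarrow> real) y))"
  by (intro sum_pos) auto

lemma psi_t_class_bounds:
  assumes "1 < K" "y \<in> {1..K}"
  shows "0 < psi_t K u y" "psi_t K u y < 1"
  using exp_lt_sum_exp[OF assms, of u] sum_exp_pos[of K u] assms
  by (simp_all add: psi_t_class divide_less_eq)

lemma sum_psi_t_class: "1 \<le> K \<Longrightarrow> (\<Sum>y=1..K. psi_t K u y) = 1"
  using sum_exp_pos[of K u] by (simp add: psi_t_class flip: sum_divide_distrib)

lemma psi_t_defer_bounds:
  assumes "1 < K"
  shows "0 < psi_t K u (K+1)" "psi_t K u (K+1) < 1"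
proof -
  define a E S where "a = exp (u (K+1))" and "E = exp (u (argmaxK K u))" and "S = (\<Sum>y=1..K. exp (u y))"
  have "E < S" unfolding E_def S_def using assms argmaxK_mem[of K u] by (intro exp_lt_sum_exp) auto
  moreover have "0 < a" by (simp add: a_def)
  moreover have "psi_t K u (K+1) = a / (a + S - E)"
    using assms psi_t_defer[of K u] by (simp add: a_def E_def S_def)
  ultimately show "0 < psi_t K u (K+1)" "psi_t K u (K+1) < 1" by (simp_all add: divide_less_eq)
qed

lemma psi_t_le_argmaxK:
  assumes "1 \<le> K" "y \<in> {1..K}"
  shows "psi_t K u y \<le> psi_t K u (argmaxK K u)"
proof -
  have "y \<noteq> K + 1" "argmaxK K u \<noteq> K + 1" using assms argmaxK_mem[OF assms(1), of u] by auto
  then have "psi_t K u y = exp (u y) / (\<Sum>y=1..K. exp (u y))"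
    "psi_t K u (argmaxK K u) = exp (u (argmaxK K u)) / (\<Sum>y=1..K. exp (u y))"
    using psi_t_class by blast+
  moreover have "exp (u y) / (\<Sum>y=1..K. exp (u y)) \<le> exp (u (argmaxK K u)) / (\<Sum>y=1..K. exp (u y))"
    using argmaxK_ge[OF assms, of u] sum_exp_pos[OF assms(1), of u] by (intro divide_right_mono) auto
  ultimately show ?thesis by simp
qed

lemma psi_t_defer_le_argmaxK_iff:
  assumes "1 < K"
  shows "psi_t K u (K+1) \<le> psi_t K u (argmaxK K u) \<longleftrightarrow> u (K+1) \<le> u (argmaxK K u)"
proof -
  define a E S where "a = exp (u (K+1))" and "E = exp (u (argmaxK K u))" and "S = (\<Sum>y=1..K. exp (u y))"
  have h: "argmaxK K u \<in> {1..K}" using argmaxK_mem[of K u] assms by simp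
  have "E < S" using exp_lt_sum_exp[OF assms h] by (simp add: E_def S_def)
  have "0 < a" "0 < E" by (simp_all add: a_def E_def)
  then have "0 < a + S - E" "0 < S" "0 < S - E" using \<open>E < S\<close> by simp_all
  have "psi_t K u (K+1) = a / (a + S - E)"
    unfolding a_def E_def S_def using assms by (intro psi_t_defer) simp
  moreover have "psi_t K u (argmaxK K u) = E / S"
    unfolding E_def S_def using h by (intro psi_t_class) auto
  ultimately have "psi_t K u (K+1) \<le> psi_t K u (argmaxK K u) \<longleftrightarrow> a / (a + S - E) \<le> E / S"
    by simp
  also have "\<dots> \<longleftrightarrow> a * S \<le> E * (a + S - E)"
    using \<open>0 < a + S - E\<close> \<open>0 < S\<close> by (simp add: divide_simps)
  also have "\<dots> \<longleftrightarrow> a * (S - E) \<le> E * (S - E)"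
    by (simp add: algebra_simps)
  also have "\<dots> \<longleftrightarrow> u (K+1) \<le> u (argmaxK K u)"
    using \<open>0 < S - E\<close> by (simp add: a_def E_def)
  finally show ?thesis .
qed

lemma L_psi_nonneg:
  assumes "1 < K" "y \<in> {1..K}"
  shows "0 \<le> L_psi K u y m"
proof -
  have "ln (psi_t K u y) < 0" "ln (psi_t K u (K+1)) < 0" "ln (1 - psi_t K u (K+1)) < 0"
    using psi_t_class_bounds[OF assms, of u] psi_t_defer_bounds[OF assms(1), of u]
    by (auto intro!: ln_less_zero)
  then show ?thesis unfolding L_psi_def by (cases "m = y") simp_all
qed

section \<open>Conditional risks at a fixed feature\<close>

text \<open>\<open>Q y m\<close> stands for the conditional probability of \<open>(Y, M) = (y, m)\<close> given \<open>X = x\<close>.\<close>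

definition label_dist :: "nat \<Rightarrow> (nat \<Rightarrow> nat \<Rightarrow> real) \<Rightarrow> bool" where
  "label_dist K Q \<longleftrightarrow>
     (\<forall>y\<in>{1..K}. \<forall>m\<in>{1..K}. 0 \<le> Q y m) \<and> (\<Sum>y=1..K. \<Sum>m=1..K. Q y m) = 1"

definition class_prob :: "nat \<Rightarrow> (nat \<Rightarrow> nat \<Rightarrow> real) \<Rightarrow> nat \<Rightarrow> real" where
  "class_prob K Q y = (\<Sum>m=1..K. Q y m)"

definition max_class_prob :: "nat \<Rightarrow> (nat \<Rightarrow> nat \<Rightarrow> real) \<Rightarrow> real" where
  "max_class_prob K Q = Max (class_prob K Q ` {1..K})"

definition expert_acc :: "nat \<Rightarrow> (nat \<Rightarrow> nat \<Rightarrow> real) \<Rightarrow> real" where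
  "expert_acc K Q = (\<Sum>y=1..K. Q y y)"

definition cond_risk_L :: "nat \<Rightarrow> (nat \<Rightarrow> nat \<Rightarrow> real) \<Rightarrow> (nat \<Rightarrow> real) \<Rightarrow> real" where
  "cond_risk_L K Q u = (\<Sum>y=1..K. \<Sum>m=1..K. Q y m * L_psi K u y m)"

definition cond_risk_defer :: "nat \<Rightarrow> (nat \<Rightarrow> nat \<Rightarrow> real) \<Rightarrow> nat option \<Rightarrow> real" where
  "cond_risk_defer K Q f = (\<Sum>y=1..K. \<Sum>m=1..K. Q y m * loss01_defer f y m)"

text \<open>Entropy of the class distribution plus binary entropy of the expert's accuracy: the infimum of
  \<open>cond_risk_L K Q\<close> over all scores.\<close>

definition cond_entropy :: "nat \<Rightarrow> (nat \<Rightarrow> nat \<Rightarrow> real) \<Rightarrow> real" where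
  "cond_entropy K Q =
     - (\<Sum>y=1..K. class_prob K Q y * ln (class_prob K Q y))
     - expert_acc K Q * ln (expert_acc K Q) - (1 - expert_acc K Q) * ln (1 - expert_acc K Q)"

context
  fixes K :: nat and Q :: "nat \<Rightarrow> nat \<Rightarrow> real"
  assumes Q: "label_dist K Q"
begin

lemma class_prob_nonneg: "y \<in> {1..K} \<Longrightarrow> 0 \<le> class_prob K Q y"
  using Q by (auto simp: label_dist_def class_prob_def intro!: sum_nonneg)

lemma sum_class_prob: "(\<Sum>y=1..K. class_prob K Q y) = 1"
  using Q by (simp add: label_dist_def class_prob_def)

lemma class_prob_le_1: "y \<in> {1..K} \<Longrightarrow> class_prob K Q y \<le> 1"
  using member_le_sum[of y "{1..K}" "class_prob K Q"] class_prob_nonneg sum_class_prob by simp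

lemma expert_acc_bounds: "0 \<le> expert_acc K Q" "expert_acc K Q \<le> 1"
proof -
  show "0 \<le> expert_acc K Q" using Q by (auto simp: label_dist_def expert_acc_def intro!: sum_nonneg)
  have "Q y y \<le> class_prob K Q y" if "y \<in> {1..K}" for y
    using Q that unfolding class_prob_def label_dist_def by (intro member_le_sum) auto
  then have "expert_acc K Q \<le> (\<Sum>y=1..K. class_prob K Q y)"
    unfolding expert_acc_def by (intro sum_mono) auto
  then show "expert_acc K Q \<le> 1" using sum_class_prob by simp
qed

lemma class_prob_le_max: "y \<in> {1..K} \<Longrightarrow> class_prob K Q y \<le> max_class_prob K Q"
  by (simp add: max_class_prob_def)

lemma max_class_prob_attained:
  assumes "1 \<le> K"
  obtains a where "a \<in> {1..K}" "max_class_prob K Q = class_prob K Q a"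
proof -
  have "max_class_prob K Q \<in> class_prob K Q ` {1..K}"
    unfolding max_class_prob_def using assms by (intro Max_in) auto
  then show ?thesis using that by blast
qed

lemma max_class_prob_bounds:
  assumes "1 \<le> K"
  shows "0 \<le> max_class_prob K Q" "max_class_prob K Q \<le> 1"
proof -
  obtain a where "a \<in> {1..K}" "max_class_prob K Q = class_prob K Q a"
    using max_class_prob_attained[OF assms] .
  then show "0 \<le> max_class_prob K Q" "max_class_prob K Q \<le> 1"
    using class_prob_nonneg class_prob_le_1 by simp_all
qed

lemma cond_risk_defer_bounds: "0 \<le> cond_risk_defer K Q f" "cond_risk_defer K Q f \<le> 1"
proof -
  have term_bounds: "0 \<le> Q y m * loss01_defer f y m \<and> Q y m * loss01_defer f y m \<le> Q y m"
    if "y \<in> {1..K}" "m \<in> {1..K}" for y m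
    using Q that by (auto simp: label_dist_def loss01_defer_def split: option.split)
  then show "0 \<le> cond_risk_defer K Q f"
    unfolding cond_risk_defer_def by (intro sum_nonneg) blast
  have "cond_risk_defer K Q f \<le> (\<Sum>y=1..K. \<Sum>m=1..K. Q y m)"
    unfolding cond_risk_defer_def using term_bounds by (intro sum_mono) blast
  then show "cond_risk_defer K Q f \<le> 1" using Q by (simp add: label_dist_def)
qed

lemma cond_risk_defer_Some:
  assumes "c \<in> {1..K}"
  shows "cond_risk_defer K Q (Some c) = 1 - class_prob K Q c"
proof -
  have "cond_risk_defer K Q (Some c) = (\<Sum>y=1..K. class_prob K Q y - (if y = c then class_prob K Q y else 0))"
    unfolding cond_risk_defer_def class_prob_def loss01_defer_def by (intro sum.cong) auto
  then show ?thesis using assms sum_class_prob by (simp add: sum_subtractf sum.delta)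
qed

lemma cond_risk_defer_None: "cond_risk_defer K Q None = 1 - expert_acc K Q"
proof -
  have "cond_risk_defer K Q None = (\<Sum>y=1..K. \<Sum>m=1..K. Q y m - (if m = y then Q y m else 0))"
    unfolding cond_risk_defer_def loss01_defer_def by (intro sum.cong) auto
  also have "\<dots> = (\<Sum>y=1..K. class_prob K Q y - Q y y)"
    by (intro sum.cong) (auto simp: sum_subtractf sum.delta class_prob_def)
  finally show ?thesis using sum_class_prob by (simp add: sum_subtractf expert_acc_def)
qed

lemma cond_risk_defer_Some_ge: "c \<in> {1..K} \<Longrightarrow> 1 - max_class_prob K Q \<le> cond_risk_defer K Q (Some c)"
  by (simp add: cond_risk_defer_Some class_prob_le_max)

lemma cond_risk_defer_ge_min:
  assumes "f \<in> insert None (Some ` {1..K})"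
  shows "min (1 - expert_acc K Q) (1 - max_class_prob K Q) \<le> cond_risk_defer K Q f"
proof (cases f)
  case None
  then show ?thesis by (simp add: cond_risk_defer_None)
next
  case (Some c)
  with assms have "c \<in> {1..K}" by auto
  then show ?thesis using Some cond_risk_defer_Some_ge by (simp add: min.coboundedI2)
qed

lemma cond_risk_L_eq:
  "cond_risk_L K Q u = - (\<Sum>y=1..K. class_prob K Q y * ln (psi_t K u y))
     - (1 - expert_acc K Q) * ln (1 - psi_t K u (K+1)) - expert_acc K Q * ln (psi_t K u (K+1))"
proof -
  define s where "s = psi_t K u (K+1)"
  define d where "d = ln (1 - s) - ln s"
  have "cond_risk_L K Q u = (\<Sum>y=1..K. \<Sum>m=1..K.
      Q y m * (- ln (psi_t K u y) - ln (1 - s)) + (if m = y then Q y m * d else 0))"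
    unfolding cond_risk_L_def L_psi_def s_def[symmetric] d_def
    by (intro sum.cong) (auto simp: algebra_simps)
  also have "\<dots> = (\<Sum>y=1..K. class_prob K Q y * (- ln (psi_t K u y) - ln (1 - s)) + Q y y * d)"
    by (intro sum.cong) (auto simp: sum.distrib class_prob_def sum_distrib_right)
  also have "\<dots> = - (\<Sum>y=1..K. class_prob K Q y * ln (psi_t K u y)) - ln (1 - s) + expert_acc K Q * d"
    using sum_class_prob
    by (simp add: sum.distrib algebra_simps sum_subtractf expert_acc_def
        flip: sum_distrib_right sum_distrib_left)
  finally show ?thesis by (simp add: s_def d_def algebra_simps)
qed

lemma cond_risk_L_minus_entropy:
  "cond_risk_L K Q u - cond_entropy K Q
     = kl_div {1..K} (class_prob K Q) (psi_t K u) + binary_kl (expert_acc K Q) (psi_t K u (K+1))"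
  by (simp add: cond_risk_L_eq cond_entropy_def kl_div_def binary_kl_def algebra_simps sum_subtractf)

lemma kl_div_class_prob_ge:
  assumes "1 < K" "c \<in> {1..K}"
  shows "2 * (class_prob K Q c - psi_t K u c)\<^sup>2 \<le> kl_div {1..K} (class_prob K Q) (psi_t K u)"
  using assms class_prob_nonneg sum_class_prob psi_t_class_bounds[OF assms(1)] sum_psi_t_class[of K u]
  by (intro kl_div_ge_coordinate) auto

lemma binary_kl_expert_acc_ge:
  assumes "1 < K"
  shows "2 * (expert_acc K Q - psi_t K u (K+1))\<^sup>2 \<le> binary_kl (expert_acc K Q) (psi_t K u (K+1))"
  using expert_acc_bounds psi_t_defer_bounds[OF assms] by (intro binary_pinsker) auto

lemma class_prob_deviation_le:
  assumes "1 < K" "c \<in> {1..K}"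
  shows "2 * (class_prob K Q c - psi_t K u c)\<^sup>2 \<le> cond_risk_L K Q u - cond_entropy K Q"
proof -
  have "0 \<le> 2 * (expert_acc K Q - psi_t K u (K+1))\<^sup>2" by simp
  then show ?thesis
    using kl_div_class_prob_ge[OF assms, of u] binary_kl_expert_acc_ge[OF assms(1), of u]
    unfolding cond_risk_L_minus_entropy by linarith
qed

lemma expert_acc_deviation_le:
  assumes "1 < K"
  shows "2 * (expert_acc K Q - psi_t K u (K+1))\<^sup>2 \<le> cond_risk_L K Q u - cond_entropy K Q"
proof -
  have "0 \<le> 2 * (class_prob K Q 1 - psi_t K u 1)\<^sup>2" by simp
  moreover have "(1::nat) \<in> {1..K}" using assms by simp
  ultimately show ?thesis
    using kl_div_class_prob_ge[OF assms, of 1 u] binary_kl_expert_acc_ge[OF assms, of u]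
    unfolding cond_risk_L_minus_entropy by linarith
qed

lemma cond_entropy_le_cond_risk_L:
  assumes "1 < K"
  shows "cond_entropy K Q \<le> cond_risk_L K Q u"
  using expert_acc_deviation_le[OF assms, of u] zero_le_power2[of "expert_acc K Q - psi_t K u (K+1)"]
  by linarith

lemma cond_excess_risk01_le:
  assumes "1 < K"
  shows "cond_risk_defer K Q (Some (argmaxK K u)) - (1 - max_class_prob K Q)
    \<le> sqrt (2 * (cond_risk_L K Q u - cond_entropy K Q))"
proof -
  define h where "h = argmaxK K u"
  have h: "h \<in> {1..K}" using argmaxK_mem assms by (simp add: h_def)
  obtain a where a: "a \<in> {1..K}" "max_class_prob K Q = class_prob K Q a"
    using max_class_prob_attained assms by auto
  have "psi_t K u a \<le> psi_t K u h" unfolding h_def using assms a by (intro psi_t_le_argmaxK) auto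
  then have "cond_risk_defer K Q (Some h) - (1 - max_class_prob K Q)
      \<le> \<bar>class_prob K Q a - psi_t K u a\<bar> + \<bar>class_prob K Q h - psi_t K u h\<bar>"
    using cond_risk_defer_Some[OF h] a by linarith
  also have "\<dots> \<le> sqrt (2 * (cond_risk_L K Q u - cond_entropy K Q))"
    using assms a h by (intro abs_add_le_sqrt class_prob_deviation_le) auto
  finally show ?thesis by (simp add: h_def)
qed

lemma cond_excess_risk_defer_le:
  assumes "1 < K"
  shows "cond_risk_defer K Q (phi K u) - min (1 - expert_acc K Q) (1 - max_class_prob K Q)
    \<le> sqrt (2 * (cond_risk_L K Q u - cond_entropy K Q))"
proof -
  define h r s where "h = argmaxK K u" and "r = expert_acc K Q" and "s = psi_t K u (K+1)"
  define bound where "bound = sqrt (2 * (cond_risk_L K Q u - cond_entropy K Q))"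
  have h: "h \<in> {1..K}" using argmaxK_mem assms by (simp add: h_def)
  obtain a where a: "a \<in> {1..K}" "max_class_prob K Q = class_prob K Q a"
    using max_class_prob_attained assms by auto
  have "psi_t K u a \<le> psi_t K u h" unfolding h_def using assms a by (intro psi_t_le_argmaxK) auto
  have dev_a: "2 * (class_prob K Q a - psi_t K u a)\<^sup>2 \<le> cond_risk_L K Q u - cond_entropy K Q"
    and dev_h: "2 * (class_prob K Q h - psi_t K u h)\<^sup>2 \<le> cond_risk_L K Q u - cond_entropy K Q"
    using assms a h by (auto intro: class_prob_deviation_le)
  have dev_r: "2 * (r - s)\<^sup>2 \<le> cond_risk_L K Q u - cond_entropy K Q"
    unfolding r_def s_def using assms by (rule expert_acc_deviation_le)
  show ?thesis
  proof (cases "u h < u (K+1)")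
    case True
    then have "phi K u = None" using assms by (simp add: phi_eq h_def)
    moreover have "psi_t K u h \<le> s"
      using True psi_t_defer_le_argmaxK_iff[OF assms, of u] by (simp add: h_def s_def)
    moreover have "\<bar>class_prob K Q a - psi_t K u a\<bar> + \<bar>r - s\<bar> \<le> bound"
      unfolding bound_def using dev_a dev_r by (rule abs_add_le_sqrt)
    ultimately show ?thesis
      using cond_risk_defer_None \<open>psi_t K u a \<le> psi_t K u h\<close> a
      by (simp add: r_def bound_def)
  next
    case False
    then have "phi K u = Some h" using assms by (simp add: phi_eq h_def)
    moreover have "s \<le> psi_t K u h"
      using False psi_t_defer_le_argmaxK_iff[OF assms, of u] by (simp add: h_def s_def)
    moreover have "\<bar>r - s\<bar> + \<bar>class_prob K Q h - psi_t K u h\<bar> \<le> bound"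
      unfolding bound_def using dev_r dev_h by (rule abs_add_le_sqrt)
    moreover have "\<bar>class_prob K Q a - psi_t K u a\<bar> + \<bar>class_prob K Q h - psi_t K u h\<bar> \<le> bound"
      unfolding bound_def using dev_a dev_h by (rule abs_add_le_sqrt)
    ultimately show ?thesis
      using cond_risk_defer_Some[OF h] \<open>psi_t K u a \<le> psi_t K u h\<close> a
      by (simp add: r_def bound_def)
  qed
qed

lemma cond_entropy_nonneg: "0 \<le> cond_entropy K Q"
proof -
  have xlnx: "x * ln x \<le> 0" if "0 \<le> x" "x \<le> 1" for x :: real
    using that by (cases "x = 0") (auto intro: mult_nonneg_nonpos)
  have "(\<Sum>y=1..K. class_prob K Q y * ln (class_prob K Q y)) \<le> 0"
    using class_prob_nonneg class_prob_le_1 by (intro sum_nonpos xlnx) auto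
  moreover have "expert_acc K Q * ln (expert_acc K Q) \<le> 0"
    "(1 - expert_acc K Q) * ln (1 - expert_acc K Q) \<le> 0"
    using expert_acc_bounds by (auto intro: xlnx)
  ultimately show ?thesis by (simp add: cond_entropy_def)
qed

end

text \<open>Scores whose softmax is \<open>(\<eta>\<^sub>y + e) / (1 + K e)\<close> on the classes and \<open>(r + e) / (1 + 2 e)\<close> for
  deferral: the optimal \<open>\<eta>\<close> and \<open>r\<close>, smoothed away from \<open>0\<close> so that all logarithms stay finite.\<close>

definition near_optimal_scores :: "nat \<Rightarrow> (nat \<Rightarrow> nat \<Rightarrow> real) \<Rightarrow> real \<Rightarrow> nat \<Rightarrow> real" where
  "near_optimal_scores K Q e j =
     (if j = K + 1
      then ln ((1 + real K * e - (max_class_prob K Q + e)) * (expert_acc K Q + e) / (1 - expert_acc K Q + e))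
      else ln (class_prob K Q j + e))"

lemma mult_ln_diff_add_nonpos: "0 \<le> (x::real) \<Longrightarrow> 0 < e \<Longrightarrow> x * (ln x - ln (x + e)) \<le> 0"
  by (cases "x = 0") (auto intro!: mult_nonneg_nonpos)

context
  fixes K :: nat and Q :: "nat \<Rightarrow> nat \<Rightarrow> real" and e :: real
  assumes Q: "label_dist K Q" and K_gt_1: "1 < K" and e_pos: "0 < e"
begin

lemma exp_near_optimal_scores:
  "y \<in> {1..K} \<Longrightarrow> exp (near_optimal_scores K Q e y) = class_prob K Q y + e"
  using class_prob_nonneg[OF Q] e_pos by (simp add: near_optimal_scores_def add_nonneg_pos)

lemma sum_exp_near_optimal_scores: "(\<Sum>y=1..K. exp (near_optimal_scores K Q e y)) = 1 + real K * e"
  using sum_class_prob[OF Q] by (simp add: exp_near_optimal_scores sum.distrib)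

lemma psi_t_near_optimal_scores_class:
  assumes "y \<in> {1..K}"
  shows "psi_t K (near_optimal_scores K Q e) y = (class_prob K Q y + e) / (1 + real K * e)"
  using assms sum_exp_near_optimal_scores exp_near_optimal_scores[OF assms] by (simp add: psi_t_class)

lemma psi_t_near_optimal_scores_defer:
  "psi_t K (near_optimal_scores K Q e) (K+1) = (expert_acc K Q + e) / (1 + 2 * e)"
proof -
  define u r where "u = near_optimal_scores K Q e" and "r = expert_acc K Q"
  have r: "0 \<le> r" "r \<le> 1" using expert_acc_bounds[OF Q] by (simp_all add: r_def)
  have "(\<lambda>y. exp (u y)) ` {1..K} = (\<lambda>y. class_prob K Q y + e) ` {1..K}"
    by (rule image_cong) (simp_all add: u_def exp_near_optimal_scores)
  then have Max_exp: "Max ((\<lambda>y. exp (u y)) ` {1..K}) = max_class_prob K Q + e"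
    using K_gt_1 by (simp add: Max_add_commute max_class_prob_def)
  have sum_exp: "(\<Sum>y=1..K. exp (u y)) = 1 + real K * e"
    unfolding u_def by (rule sum_exp_near_optimal_scores)
  define D where "D = 1 + real K * e - (max_class_prob K Q + e)"
  have "Max ((\<lambda>y. exp (u y)) ` {1..K}) < (\<Sum>y=1..K. exp (u y))"
    using exp_lt_sum_exp[OF K_gt_1 argmaxK_mem, of u u] Max_mono_image_eq_argmaxK[of exp K u] K_gt_1
    by (simp add: mono_def)
  then have "0 < D" unfolding D_def sum_exp Max_exp by simp
  have "0 < 1 - r + e" using r e_pos by simp
  define a where "a = exp (u (K+1))"
  have a: "a = D * (r + e) / (1 - r + e)"
    using \<open>0 < D\<close> \<open>0 < 1 - r + e\<close> r e_pos
    by (simp add: a_def u_def near_optimal_scores_def D_def r_def)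
  have "a + D = D * (1 + 2 * e) / (1 - r + e)"
    unfolding a using \<open>0 < 1 - r + e\<close> by (simp add: field_simps)
  then have "a / (a + D) = (D * (r + e) / (1 - r + e)) / (D * (1 + 2 * e) / (1 - r + e))"
    by (simp only: a)
  also have "\<dots> = (r + e) / (1 + 2 * e)"
    using \<open>0 < D\<close> \<open>0 < 1 - r + e\<close> by simp
  finally have "a / (a + D) = (r + e) / (1 + 2 * e)" .
  moreover have "psi_t K u (K+1) = a / (a + D)"
    using Max_exp sum_exp by (simp add: psi_t_def a_def D_def algebra_simps)
  ultimately show ?thesis by (simp add: u_def r_def)
qed

lemma kl_div_near_optimal_scores_le:
  "kl_div {1..K} (class_prob K Q) (psi_t K (near_optimal_scores K Q e)) \<le> real K * e"
proof -
  have "0 < 1 + real K * e" using e_pos by (simp add: add_pos_nonneg)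
  have "kl_div {1..K} (class_prob K Q) (psi_t K (near_optimal_scores K Q e))
      \<le> (\<Sum>y=1..K. class_prob K Q y * ln (1 + real K * e))"
    unfolding kl_div_def
  proof (rule sum_mono)
    fix y assume y: "y \<in> {1..K}"
    have "0 \<le> class_prob K Q y" using Q y by (rule class_prob_nonneg)
    then have ln_psi: "ln (psi_t K (near_optimal_scores K Q e) y) = ln (class_prob K Q y + e) - ln (1 + real K * e)"
      using e_pos \<open>0 < 1 + real K * e\<close> by (simp add: psi_t_near_optimal_scores_class[OF y] ln_div)
    have "class_prob K Q y * (ln (class_prob K Q y) - ln (psi_t K (near_optimal_scores K Q e) y))
        = class_prob K Q y * (ln (class_prob K Q y) - ln (class_prob K Q y + e))
          + class_prob K Q y * ln (1 + real K * e)"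
      unfolding ln_psi by (simp add: algebra_simps)
    then show "class_prob K Q y * (ln (class_prob K Q y) - ln (psi_t K (near_optimal_scores K Q e) y))
        \<le> class_prob K Q y * ln (1 + real K * e)"
      using mult_ln_diff_add_nonpos[OF \<open>0 \<le> class_prob K Q y\<close> e_pos] by linarith
  qed
  also have "\<dots> = ln (1 + real K * e)"
    using sum_class_prob[OF Q] by (simp flip: sum_distrib_right)
  also have "\<dots> \<le> real K * e"
    using e_pos by (intro ln_add_one_self_le_self) simp
  finally show ?thesis .
qed

lemma binary_kl_near_optimal_scores_le:
  "binary_kl (expert_acc K Q) (psi_t K (near_optimal_scores K Q e) (K+1)) \<le> 2 * e"
proof -
  define r where "r = expert_acc K Q"
  have r: "0 \<le> r" "r \<le> 1" using expert_acc_bounds[OF Q] by (simp_all add: r_def)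
  have "1 - (r + e) / (1 + 2 * e) = (1 - r + e) / (1 + 2 * e)"
    using e_pos by (simp add: field_simps)
  then have ln_psi: "ln (1 - psi_t K (near_optimal_scores K Q e) (K+1)) = ln (1 - r + e) - ln (1 + 2 * e)"
    "ln (psi_t K (near_optimal_scores K Q e) (K+1)) = ln (r + e) - ln (1 + 2 * e)"
    unfolding psi_t_near_optimal_scores_defer r_def[symmetric] using r e_pos by (simp_all add: ln_div)
  have "binary_kl r (psi_t K (near_optimal_scores K Q e) (K+1))
      = r * (ln r - ln (r + e)) + (1 - r) * (ln (1 - r) - ln (1 - r + e)) + ln (1 + 2 * e)"
    unfolding binary_kl_def ln_psi by (simp add: algebra_simps)
  also have "\<dots> \<le> ln (1 + 2 * e)"
    using mult_ln_diff_add_nonpos[of r e] mult_ln_diff_add_nonpos[of "1 - r" e] r e_pos by simp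
  also have "\<dots> \<le> 2 * e"
    using e_pos by (intro ln_add_one_self_le_self) simp
  finally show ?thesis by (simp add: r_def)
qed

lemma cond_risk_L_near_optimal_scores:
  "cond_risk_L K Q (near_optimal_scores K Q e) \<le> cond_entropy K Q + (real K + 2) * e"
  using cond_risk_L_minus_entropy[OF Q, of "near_optimal_scores K Q e"]
    kl_div_near_optimal_scores_le binary_kl_near_optimal_scores_le
  by (simp add: algebra_simps)

end

section \<open>Conditional distribution of a finite label\<close>

locale labelled_prob_space = prob_space D
  for Xs :: "'a measure" and D :: "('a \<times> 'l) measure" and L :: "'l set" +
  assumes finite_labels: "finite L" and labels_nonempty: "L \<noteq> {}"
    and sets_D: "sets D = sets (Xs \<Otimes>\<^sub>M count_space L)"
begin

lemma space_D: "space D = space Xs \<times> L"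
  using sets_eq_imp_space_eq[OF sets_D] by (simp add: space_pair_measure)

lemma measurable_D_iff: "D \<rightarrow>\<^sub>M N = (Xs \<Otimes>\<^sub>M count_space L) \<rightarrow>\<^sub>M N"
  by (rule measurable_cong_sets[OF sets_D refl])

lemma measurable_fst_D[measurable]: "fst \<in> D \<rightarrow>\<^sub>M Xs"
  unfolding measurable_D_iff by measurable

lemma measurable_labelled:
  assumes "\<And>l. l \<in> L \<Longrightarrow> (\<lambda>x. f x l) \<in> Xs \<rightarrow>\<^sub>M N"
  shows "(\<lambda>z. f (fst z) (snd z)) \<in> D \<rightarrow>\<^sub>M N"
  unfolding measurable_D_iff
proof (rule measurable_compose_countable'[where g = snd and I = L])
  show "(\<lambda>z. f (fst z) l) \<in> Xs \<Otimes>\<^sub>M count_space L \<rightarrow>\<^sub>M N" if "l \<in> L" for l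
    by (rule measurable_compose[OF measurable_fst assms[OF that]])
qed (use finite_labels in \<open>auto intro: countable_finite\<close>)

lemma measurable_label_indicator[measurable]:
  "(\<lambda>z. indicator {l} (snd z) :: ennreal) \<in> borel_measurable D"
  using measurable_labelled[of "\<lambda>_ l'. indicator {l} l' :: ennreal"] by simp

definition marginal :: "'a measure" where
  "marginal = distr D Xs fst"

lemma sets_marginal[measurable_cong, simp]: "sets marginal = sets Xs"
  and space_marginal[simp]: "space marginal = space Xs"
  by (simp_all add: marginal_def)

lemma measurable_marginal_iff[simp]: "marginal \<rightarrow>\<^sub>M N = Xs \<rightarrow>\<^sub>M N"
  by (rule measurable_cong_sets) auto

lemma prob_space_marginal: "prob_space marginal"
  unfolding marginal_def by (rule prob_space_distr) simp

sublocale marginal: prob_space marginal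
  by (rule prob_space_marginal)

definition label_part :: "'l \<Rightarrow> 'a measure" where
  "label_part l = distr (density D (\<lambda>z. indicator {l} (snd z))) Xs fst"

lemma label_part_absolutely_continuous: "absolutely_continuous marginal (label_part l)"
  unfolding absolutely_continuous_def
proof safe
  fix A assume A: "A \<in> null_sets marginal"
  then have "A \<in> sets Xs" by (auto dest: null_setsD2)
  have "fst -` A \<inter> space D \<in> sets D"
    using \<open>A \<in> sets Xs\<close> by (rule measurable_sets[OF measurable_fst_D])
  then have "emeasure (label_part l) A = (\<integral>\<^sup>+ z. indicator {l} (snd z) * indicator (fst -` A \<inter> space D) z \<partial>D)"
    unfolding label_part_def using \<open>A \<in> sets Xs\<close>
    by (simp add: emeasure_distr emeasure_density)
  also have "\<dots> \<le> (\<integral>\<^sup>+ z. indicator (fst -` A \<inter> space D) z \<partial>D)"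
    by (intro nn_integral_mono) (auto split: split_indicator)
  also have "\<dots> = emeasure marginal A"
    unfolding marginal_def using \<open>A \<in> sets Xs\<close> by (simp add: emeasure_distr)
  finally show "A \<in> null_sets (label_part l)"
    using A by (auto simp: label_part_def null_sets_def)
qed

definition label_density :: "'l \<Rightarrow> 'a \<Rightarrow> ennreal" where
  "label_density l = RN_deriv marginal (label_part l)"

lemma measurable_label_density[measurable]: "label_density l \<in> borel_measurable Xs"
  unfolding label_density_def using borel_measurable_RN_deriv[of marginal "label_part l"] by simp

lemma density_label_density: "density marginal (label_density l) = label_part l"
  unfolding label_density_def
  by (rule sigma_finite_measure.density_RN_deriv[OF _ label_part_absolutely_continuous])
     (auto simp: label_part_def prob_space_imp_sigma_finite[OF prob_space_marginal])

lemma nn_integral_label_density: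
  assumes f: "\<And>l. l \<in> L \<Longrightarrow> (\<lambda>x. f x l) \<in> borel_measurable Xs"
  shows "(\<integral>\<^sup>+z. f (fst z) (snd z) \<partial>D) = (\<integral>\<^sup>+x. (\<Sum>l\<in>L. label_density l x * f x l) \<partial>marginal)"
proof -
  have fD[measurable]: "(\<lambda>z. f (fst z) l) \<in> borel_measurable D" if "l \<in> L" for l
    using measurable_compose[OF measurable_fst_D f[OF that]] .
  have "(\<integral>\<^sup>+z. f (fst z) (snd z) \<partial>D) = (\<integral>\<^sup>+z. (\<Sum>l\<in>L. indicator {l} (snd z) * f (fst z) l) \<partial>D)"
    using finite_labels by (intro nn_integral_cong) (auto simp: space_D indicator_def sum.If_cases)
  also have "\<dots> = (\<Sum>l\<in>L. \<integral>\<^sup>+z. indicator {l} (snd z) * f (fst z) l \<partial>D)"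
    by (intro nn_integral_sum) auto
  also have "\<dots> = (\<Sum>l\<in>L. \<integral>\<^sup>+x. label_density l x * f x l \<partial>marginal)"
  proof (intro sum.cong refl)
    fix l assume l: "l \<in> L"
    have "(\<integral>\<^sup>+z. indicator {l} (snd z) * f (fst z) l \<partial>D) = (\<integral>\<^sup>+x. f x l \<partial>label_part l)"
      using f[OF l] fD[OF l] by (simp add: label_part_def nn_integral_distr nn_integral_density)
    also have "\<dots> = (\<integral>\<^sup>+x. label_density l x * f x l \<partial>marginal)"
      using f[OF l] by (simp add: nn_integral_density flip: density_label_density)
    finally show "(\<integral>\<^sup>+z. indicator {l} (snd z) * f (fst z) l \<partial>D) = (\<integral>\<^sup>+x. label_density l x * f x l \<partial>marginal)" .
  qed
  also have "\<dots> = (\<integral>\<^sup>+x. (\<Sum>l\<in>L. label_density l x * f x l) \<partial>marginal)"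
    using f by (intro nn_integral_sum[symmetric]) auto
  finally show ?thesis .
qed

lemma AE_sum_label_density: "AE x in marginal. (\<Sum>l\<in>L. label_density l x) = 1"
proof -
  have "AE x in marginal. (\<Sum>l\<in>L. label_density l x) = 1"
  proof (rule marginal.density_unique2)
    fix A assume "A \<in> sets marginal"
    then have A[measurable]: "A \<in> sets Xs" by simp
    have "(\<integral>\<^sup>+x\<in>A. (\<Sum>l\<in>L. label_density l x) \<partial>marginal)
        = (\<integral>\<^sup>+x. (\<Sum>l\<in>L. label_density l x * indicator A x) \<partial>marginal)"
      by (simp add: sum_distrib_right)
    also have "\<dots> = (\<integral>\<^sup>+z. indicator A (fst z) \<partial>D)"
      by (rule nn_integral_label_density[symmetric]) simp
    also have "\<dots> = (\<integral>\<^sup>+x. indicator A x \<partial>marginal)"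
      unfolding marginal_def by (rule nn_integral_distr[symmetric]) simp_all
    also have "\<dots> = (\<integral>\<^sup>+x\<in>A. 1 \<partial>marginal)"
      by simp
    finally show "(\<integral>\<^sup>+x\<in>A. (\<Sum>l\<in>L. label_density l x) \<partial>marginal) = (\<integral>\<^sup>+x\<in>A. 1 \<partial>marginal)" .
  qed auto
  then show ?thesis .
qed

text \<open>The Radon-Nikodym derivatives sum to one only almost everywhere; on the exceptional null set
  \<open>cond_prob\<close> is the uniform distribution, so that it is a probability on \<open>L\<close> at every point.\<close>

definition cond_prob :: "'l \<Rightarrow> 'a \<Rightarrow> real" where
  "cond_prob l x = (if (\<Sum>l'\<in>L. label_density l' x) = 1 then enn2real (label_density l x) else 1 / card L)"

lemma measurable_cond_prob[measurable]: "cond_prob l \<in> borel_measurable Xs"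
  unfolding cond_prob_def by measurable

lemma cond_prob_nonneg: "0 \<le> cond_prob l x"
  by (simp add: cond_prob_def)

lemma label_density_le_1:
  assumes "(\<Sum>l'\<in>L. label_density l' x) = 1" "l \<in> L"
  shows "label_density l x \<le> 1"
  using member_le_sum[of l L "\<lambda>l. label_density l x"] assms finite_labels by simp

lemma sum_cond_prob: "(\<Sum>l\<in>L. cond_prob l x) = 1"
proof (cases "(\<Sum>l\<in>L. label_density l x) = 1")
  case True
  have "label_density l x < \<top>" if "l \<in> L" for l
    using label_density_le_1[OF True that] ennreal_one_less_top by (rule order.strict_trans1)
  have "(\<Sum>l\<in>L. cond_prob l x) = (\<Sum>l\<in>L. enn2real (label_density l x))"
    using True by (simp add: cond_prob_def)
  also have "\<dots> = enn2real (\<Sum>l\<in>L. label_density l x)"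
    using \<open>\<And>l. l \<in> L \<Longrightarrow> label_density l x < \<top>\<close> by (simp add: enn2real_sum comp_def)
  finally show ?thesis using True by simp
next
  case False
  then show ?thesis using finite_labels labels_nonempty by (simp add: cond_prob_def)
qed

lemma AE_cond_prob_eq:
  "AE x in marginal. \<forall>l\<in>L. ennreal (cond_prob l x) = label_density l x"
  using AE_sum_label_density
proof eventually_elim
  case (elim x)
  have "label_density l x < \<top>" if "l \<in> L" for l
    using label_density_le_1[OF elim that] ennreal_one_less_top by (rule order.strict_trans1)
  then show ?case using elim by (simp add: cond_prob_def ennreal_enn2real)
qed

lemma nn_integral_disintegration:
  fixes f :: "'a \<Rightarrow> 'l \<Rightarrow> real"
  assumes f: "\<And>l. l \<in> L \<Longrightarrow> (\<lambda>x. f x l) \<in> borel_measurable Xs"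
    and nonneg: "\<And>x l. l \<in> L \<Longrightarrow> 0 \<le> f x l"
  shows "(\<integral>\<^sup>+z. ennreal (f (fst z) (snd z)) \<partial>D) = (\<integral>\<^sup>+x. ennreal (\<Sum>l\<in>L. cond_prob l x * f x l) \<partial>marginal)"
proof -
  have "(\<integral>\<^sup>+z. ennreal (f (fst z) (snd z)) \<partial>D) = (\<integral>\<^sup>+x. (\<Sum>l\<in>L. label_density l x * ennreal (f x l)) \<partial>marginal)"
    using f by (intro nn_integral_label_density) auto
  also have "\<dots> = (\<integral>\<^sup>+x. (\<Sum>l\<in>L. ennreal (cond_prob l x * f x l)) \<partial>marginal)"
    using AE_cond_prob_eq
    by (intro nn_integral_cong_AE, eventually_elim) (auto simp: ennreal_mult' cond_prob_nonneg intro!: sum.cong)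
  also have "\<dots> = (\<integral>\<^sup>+x. ennreal (\<Sum>l\<in>L. cond_prob l x * f x l) \<partial>marginal)"
    by (intro nn_integral_cong sum_ennreal) (auto simp: nonneg cond_prob_nonneg)
  finally show ?thesis .
qed

lemma integral_disintegration:
  fixes f :: "'a \<Rightarrow> 'l \<Rightarrow> real"
  assumes f: "\<And>l. l \<in> L \<Longrightarrow> (\<lambda>x. f x l) \<in> borel_measurable Xs"
    and nonneg: "\<And>x l. l \<in> L \<Longrightarrow> 0 \<le> f x l"
  shows "(\<integral>z. f (fst z) (snd z) \<partial>D) = (\<integral>x. (\<Sum>l\<in>L. cond_prob l x * f x l) \<partial>marginal)"
proof -
  have "(\<integral>z. f (fst z) (snd z) \<partial>D) = enn2real (\<integral>\<^sup>+z. ennreal (f (fst z) (snd z)) \<partial>D)"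
    using f by (intro integral_eq_nn_integral measurable_labelled AE_I2) (auto simp: space_D nonneg)
  also have "\<dots> = enn2real (\<integral>\<^sup>+x. ennreal (\<Sum>l\<in>L. cond_prob l x * f x l) \<partial>marginal)"
    using f nonneg by (simp add: nn_integral_disintegration)
  also have "\<dots> = (\<integral>x. (\<Sum>l\<in>L. cond_prob l x * f x l) \<partial>marginal)"
    using f by (intro integral_eq_nn_integral[symmetric] AE_I2)
      (auto simp: nonneg cond_prob_nonneg sum_nonneg)
  finally show ?thesis .
qed

end

section \<open>Integrated risks\<close>

lemma (in finite_measure) integrable_sqrt:
  fixes Z :: "'a \<Rightarrow> real"
  assumes Z: "integrable M Z" and nonneg: "AE x in M. 0 \<le> Z x"
  shows "integrable M (\<lambda>x. sqrt (Z x))"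
proof (rule Bochner_Integration.integrable_bound)
  have sqrt_le: "sqrt z \<le> 1 + z" if "0 \<le> z" for z :: real
  proof -
    have "0 \<le> (sqrt z - 1)\<^sup>2" by simp
    then have "2 * sqrt z \<le> 1 + z" using that by (simp add: power2_eq_square algebra_simps)
    then show ?thesis using that by simp
  qed
  show "AE x in M. norm (sqrt (Z x)) \<le> norm (1 + Z x)"
    using nonneg by eventually_elim (simp add: sqrt_le)
  show "integrable M (\<lambda>x. 1 + Z x)" using Z by simp
  show "(\<lambda>x. sqrt (Z x)) \<in> borel_measurable M" using borel_measurable_integrable[OF Z] by measurable
qed

lemma (in prob_space) expectation_sqrt_le:
  fixes Z :: "'a \<Rightarrow> real"
  assumes Z: "integrable M Z" and nonneg: "AE x in M. 0 \<le> Z x"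
  shows "expectation (\<lambda>x. sqrt (Z x)) \<le> sqrt (expectation Z)"
proof -
  have "integrable M (\<lambda>x. sqrt (Z x))" using Z nonneg by (rule integrable_sqrt)
  moreover have sq: "AE x in M. (sqrt (Z x))\<^sup>2 = Z x" using nonneg by eventually_elim simp
  moreover have "integrable M (\<lambda>x. (sqrt (Z x))\<^sup>2)"
    using Z sq by (subst integrable_cong_AE) auto
  moreover have "expectation (\<lambda>x. (sqrt (Z x))\<^sup>2) = expectation Z"
    using borel_measurable_integrable[OF Z] sq by (intro integral_cong_AE) auto
  ultimately have "0 \<le> expectation Z - (expectation (\<lambda>x. sqrt (Z x)))\<^sup>2"
    \<comment> \<open>the variance of \<open>sqrt Z\<close>\<close>
    using variance_positive[of "\<lambda>x. sqrt (Z x)"] by (simp add: variance_eq)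
  then show ?thesis by (intro real_le_rsqrt) simp
qed

locale deferral_problem = labelled_prob_space Xs D "{1..K} \<times> {1..K}"
  for Xs :: "'a measure" and D :: "('a \<times> nat \<times> nat) measure" and K :: nat +
  assumes K_gt_1: "1 < K"
begin

definition cond_dist :: "'a \<Rightarrow> nat \<Rightarrow> nat \<Rightarrow> real" where
  "cond_dist x y m = cond_prob (y, m) x"

lemma measurable_cond_dist[measurable]: "(\<lambda>x. cond_dist x y m) \<in> borel_measurable Xs"
  unfolding cond_dist_def by measurable

lemma label_dist_cond_dist: "label_dist K (cond_dist x)"
  using sum_cond_prob[of x] cond_prob_nonneg
  by (simp add: label_dist_def cond_dist_def split_beta' sum.cartesian_product)

lemma nn_integral_cond_dist:
  assumes "\<And>y m. (\<lambda>x. F x y m) \<in> borel_measurable Xs"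
    and "\<And>x y m. y \<in> {1..K} \<Longrightarrow> m \<in> {1..K} \<Longrightarrow> 0 \<le> F x y m"
  shows "(\<integral>\<^sup>+(x, y, m). ennreal (F x y m) \<partial>D)
    = (\<integral>\<^sup>+x. ennreal (\<Sum>y=1..K. \<Sum>m=1..K. cond_dist x y m * F x y m) \<partial>marginal)"
proof -
  have "(\<integral>\<^sup>+z. ennreal (F (fst z) (fst (snd z)) (snd (snd z))) \<partial>D)
      = (\<integral>\<^sup>+x. ennreal (\<Sum>l\<in>{1..K} \<times> {1..K}. cond_prob l x * F x (fst l) (snd l)) \<partial>marginal)"
    using assms by (intro nn_integral_disintegration[of "\<lambda>x l. F x (fst l) (snd l)"]) auto
  then show ?thesis by (simp add: split_beta' cond_dist_def sum.cartesian_product)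
qed

lemma integral_cond_dist:
  assumes "\<And>y m. (\<lambda>x. F x y m) \<in> borel_measurable Xs"
    and "\<And>x y m. y \<in> {1..K} \<Longrightarrow> m \<in> {1..K} \<Longrightarrow> 0 \<le> F x y m"
  shows "(\<integral>(x, y, m). F x y m \<partial>D)
    = (\<integral>x. (\<Sum>y=1..K. \<Sum>m=1..K. cond_dist x y m * F x y m) \<partial>marginal)"
proof -
  have "(\<integral>z. F (fst z) (fst (snd z)) (snd (snd z)) \<partial>D)
      = (\<integral>x. (\<Sum>l\<in>{1..K} \<times> {1..K}. cond_prob l x * F x (fst l) (snd l)) \<partial>marginal)"
    using assms by (intro integral_disintegration[of "\<lambda>x l. F x (fst l) (snd l)"]) auto
  then show ?thesis by (simp add: split_beta' cond_dist_def sum.cartesian_product)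
qed

lemma measurable_argmaxK_scores:
  assumes [measurable]: "\<And>j. (\<lambda>x. G x j) \<in> borel_measurable Xs"
  shows "(\<lambda>x. argmaxK K (G x)) \<in> Xs \<rightarrow>\<^sub>M count_space UNIV"
  unfolding argmaxK_def by measurable

lemma measurable_phi_scores:
  assumes [measurable]: "\<And>j. (\<lambda>x. G x j) \<in> borel_measurable Xs"
  shows "(\<lambda>x. phi K (G x)) \<in> Xs \<rightarrow>\<^sub>M count_space UNIV"
  unfolding phi_def argmaxK_def by measurable

lemma risk_L_eq:
  assumes G[measurable]: "\<And>j. (\<lambda>x. G x j) \<in> borel_measurable Xs"
  shows "risk_L D K G = (\<integral>\<^sup>+x. ennreal (cond_risk_L K (cond_dist x) (G x)) \<partial>marginal)"
  unfolding risk_L_def cond_risk_L_def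
proof (rule nn_integral_cond_dist)
  fix y m
  show "(\<lambda>x. L_psi K (G x) y m) \<in> borel_measurable Xs"
    unfolding L_psi_def psi_t_def by measurable
next
  fix x y m assume "y \<in> {1..K}"
  with K_gt_1 show "0 \<le> L_psi K (G x) y m" by (rule L_psi_nonneg)
qed

lemma risk_defer_eq:
  assumes f: "f \<in> Xs \<rightarrow>\<^sub>M count_space UNIV"
  shows "risk_defer D f = (\<integral>x. cond_risk_defer K (cond_dist x) (f x) \<partial>marginal)"
  unfolding risk_defer_def cond_risk_defer_def
proof (rule integral_cond_dist)
  fix y m
  show "(\<lambda>x. loss01_defer (f x) y m) \<in> borel_measurable Xs"
    using measurable_compose[OF f borel_measurable_count_space] .
qed (simp add: loss01_defer_def split: option.split)

lemma risk01_eq_risk_defer: "risk01 D h = risk_defer D (\<lambda>x. Some (h x))"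
proof -
  define S where "S = {(x, y, m) \<in> space D. h x \<noteq> y}"
  have "S \<inter> space D = S" by (auto simp: S_def)
  then have "risk01 D h = (\<integral>z. indicator S z \<partial>D)"
    by (simp add: risk01_def S_def)
  also have "\<dots> = risk_defer D (\<lambda>x. Some (h x))"
    unfolding risk_defer_def S_def
    by (intro Bochner_Integration.integral_cong) (auto simp: loss01_defer_def indicator_def)
  finally show ?thesis .
qed

lemma measurable_class_prob[measurable]: "(\<lambda>x. class_prob K (cond_dist x) y) \<in> borel_measurable Xs"
  unfolding class_prob_def by measurable

lemma measurable_max_class_prob[measurable]: "(\<lambda>x. max_class_prob K (cond_dist x)) \<in> borel_measurable Xs"
  unfolding max_class_prob_def by measurable

lemma measurable_expert_acc[measurable]: "(\<lambda>x. expert_acc K (cond_dist x)) \<in> borel_measurable Xs"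
  unfolding expert_acc_def by measurable

lemma measurable_cond_entropy[measurable]: "(\<lambda>x. cond_entropy K (cond_dist x)) \<in> borel_measurable Xs"
  unfolding cond_entropy_def by measurable

lemma integrable_cond_risk_defer:
  assumes f: "f \<in> Xs \<rightarrow>\<^sub>M count_space UNIV"
  shows "integrable marginal (\<lambda>x. cond_risk_defer K (cond_dist x) (f x))"
proof (rule marginal.integrable_const_bound[where B = 1])
  have [measurable]: "(\<lambda>x. loss01_defer (f x) y m) \<in> borel_measurable Xs" for y m
    using measurable_compose[OF f borel_measurable_count_space] .
  show "(\<lambda>x. cond_risk_defer K (cond_dist x) (f x)) \<in> borel_measurable marginal"
    unfolding cond_risk_defer_def by measurable
  show "AE x in marginal. norm (cond_risk_defer K (cond_dist x) (f x)) \<le> 1"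
    using cond_risk_defer_bounds[OF label_dist_cond_dist] by (intro AE_I2) simp
qed

lemma integral_le_risk_defer:
  assumes f: "f \<in> Xs \<rightarrow>\<^sub>M count_space UNIV" and b: "b \<in> borel_measurable Xs"
    and bounds: "\<And>x. x \<in> space Xs \<Longrightarrow> 0 \<le> b x \<and> b x \<le> cond_risk_defer K (cond_dist x) (f x)"
  shows "(\<integral>x. b x \<partial>marginal) \<le> risk_defer D f"
  unfolding risk_defer_eq[OF f]
proof (rule integral_mono)
  show c: "integrable marginal (\<lambda>x. cond_risk_defer K (cond_dist x) (f x))"
    using f by (rule integrable_cond_risk_defer)
  have "AE x in marginal. norm (b x) \<le> norm (cond_risk_defer K (cond_dist x) (f x))"
  proof (rule AE_I2)
    fix x assume "x \<in> space marginal"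
    then have "0 \<le> b x" "b x \<le> cond_risk_defer K (cond_dist x) (f x)" using bounds by auto
    then show "norm (b x) \<le> norm (cond_risk_defer K (cond_dist x) (f x))" by simp
  qed
  from Bochner_Integration.integrable_bound[OF c _ this] b show "integrable marginal b" by simp
qed (use bounds in simp)

lemma risk01_star_ge: "(\<integral>x. 1 - max_class_prob K (cond_dist x) \<partial>marginal) \<le> risk01_star Xs D K"
  unfolding risk01_star_def
proof (rule cINF_greatest)
  have "(\<lambda>_. 1) \<in> Xs \<rightarrow>\<^sub>M count_space {1..K}" using K_gt_1 by (intro measurable_const) auto
  then show "Xs \<rightarrow>\<^sub>M count_space {1..K} \<noteq> {}" by blast
  fix h assume h: "h \<in> Xs \<rightarrow>\<^sub>M count_space {1..K}"
  have "(\<integral>x. 1 - max_class_prob K (cond_dist x) \<partial>marginal) \<le> risk_defer D (\<lambda>x. Some (h x))"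
  proof (rule integral_le_risk_defer)
    show "(\<lambda>x. Some (h x)) \<in> Xs \<rightarrow>\<^sub>M count_space UNIV"
      by (rule measurable_compose[OF h measurable_count_space])
    fix x assume "x \<in> space Xs"
    then have "h x \<in> {1..K}" using measurable_space[OF h] by simp
    then show "0 \<le> 1 - max_class_prob K (cond_dist x)
        \<and> 1 - max_class_prob K (cond_dist x) \<le> cond_risk_defer K (cond_dist x) (Some (h x))"
      using K_gt_1 by (simp add: label_dist_cond_dist max_class_prob_bounds cond_risk_defer_Some_ge)
  qed simp
  then show "(\<integral>x. 1 - max_class_prob K (cond_dist x) \<partial>marginal) \<le> risk01 D h"
    by (simp add: risk01_eq_risk_defer)
qed

lemma risk_defer_star_ge:
  "(\<integral>x. min (1 - expert_acc K (cond_dist x)) (1 - max_class_prob K (cond_dist x)) \<partial>marginal)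
    \<le> risk_defer_star Xs D K"
  unfolding risk_defer_star_def
proof (rule cINF_greatest)
  have "(\<lambda>_. None) \<in> Xs \<rightarrow>\<^sub>M count_space (insert None (Some ` {1..K}))" by (intro measurable_const) auto
  then show "Xs \<rightarrow>\<^sub>M count_space (insert None (Some ` {1..K})) \<noteq> {}" by blast
  fix f assume f: "f \<in> Xs \<rightarrow>\<^sub>M count_space (insert None (Some ` {1..K}))"
  show "(\<integral>x. min (1 - expert_acc K (cond_dist x)) (1 - max_class_prob K (cond_dist x)) \<partial>marginal)
      \<le> risk_defer D f"
  proof (rule integral_le_risk_defer)
    show "f \<in> Xs \<rightarrow>\<^sub>M count_space UNIV"
      using measurable_compose[OF f measurable_count_space[of "\<lambda>v. v"]] by simp
    fix x assume "x \<in> space Xs"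
    then have "f x \<in> insert None (Some ` {1..K})" using measurable_space[OF f] by simp
    then show "0 \<le> min (1 - expert_acc K (cond_dist x)) (1 - max_class_prob K (cond_dist x))
        \<and> min (1 - expert_acc K (cond_dist x)) (1 - max_class_prob K (cond_dist x))
          \<le> cond_risk_defer K (cond_dist x) (f x)"
      using K_gt_1 max_class_prob_bounds[OF label_dist_cond_dist] expert_acc_bounds[OF label_dist_cond_dist]
      by (simp add: label_dist_cond_dist cond_risk_defer_ge_min)
  qed simp
qed

lemma risk_L_star_le: "risk_L_star Xs D K \<le> (\<integral>\<^sup>+x. ennreal (cond_entropy K (cond_dist x)) \<partial>marginal)"
proof (rule ennreal_le_epsilon)
  fix \<epsilon> :: real assume "0 < \<epsilon>"
  define e where "e = \<epsilon> / (real K + 2)"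
  have "0 < e" using \<open>0 < \<epsilon>\<close> by (simp add: e_def)
  define G where "G x = near_optimal_scores K (cond_dist x) e" for x
  have G[measurable]: "(\<lambda>x. G x j) \<in> borel_measurable Xs" for j
    by (cases "j = K + 1") (simp_all add: G_def near_optimal_scores_def)
  then have "risk_L_star Xs D K \<le> risk_L D K G"
    unfolding risk_L_star_def by (intro INF_lower) (simp add: meas_scores_def)
  also have "\<dots> = (\<integral>\<^sup>+x. ennreal (cond_risk_L K (cond_dist x) (G x)) \<partial>marginal)"
    using G by (rule risk_L_eq)
  also have "\<dots> \<le> (\<integral>\<^sup>+x. ennreal (cond_entropy K (cond_dist x)) + ennreal \<epsilon> \<partial>marginal)"
  proof (intro nn_integral_mono)
    fix x
    have "cond_risk_L K (cond_dist x) (G x) \<le> cond_entropy K (cond_dist x) + \<epsilon>"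
      using cond_risk_L_near_optimal_scores[OF label_dist_cond_dist K_gt_1 \<open>0 < e\<close>]
      by (simp add: G_def e_def)
    then show "ennreal (cond_risk_L K (cond_dist x) (G x)) \<le> ennreal (cond_entropy K (cond_dist x)) + ennreal \<epsilon>"
      using \<open>0 < \<epsilon>\<close> cond_entropy_nonneg[OF label_dist_cond_dist]
      by (simp add: ennreal_plus[symmetric] ennreal_leI del: ennreal_plus)
  qed
  also have "\<dots> = (\<integral>\<^sup>+x. ennreal (cond_entropy K (cond_dist x)) \<partial>marginal) + ennreal \<epsilon>"
    using marginal.emeasure_space_1 by (simp add: nn_integral_add)
  finally show "risk_L_star Xs D K \<le> (\<integral>\<^sup>+x. ennreal (cond_entropy K (cond_dist x)) \<partial>marginal) + ennreal \<epsilon>" .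
qed

definition cond_excess_L :: "('a \<Rightarrow> nat \<Rightarrow> real) \<Rightarrow> 'a \<Rightarrow> real" where
  "cond_excess_L G x = cond_risk_L K (cond_dist x) (G x) - cond_entropy K (cond_dist x)"

lemma
  assumes G[measurable]: "\<And>j. (\<lambda>x. G x j) \<in> borel_measurable Xs" and finite: "risk_L D K G \<noteq> \<infinity>"
  shows integrable_cond_risk_L: "integrable marginal (\<lambda>x. cond_risk_L K (cond_dist x) (G x))"
    and enn2real_risk_L: "enn2real (risk_L D K G) = (\<integral>x. cond_risk_L K (cond_dist x) (G x) \<partial>marginal)"
proof -
  have meas: "(\<lambda>x. cond_risk_L K (cond_dist x) (G x)) \<in> borel_measurable marginal"
    unfolding cond_risk_L_def L_psi_def psi_t_def by measurable
  have nonneg: "0 \<le> cond_risk_L K (cond_dist x) (G x)" for x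
    using cond_entropy_nonneg[OF label_dist_cond_dist]
      cond_entropy_le_cond_risk_L[OF label_dist_cond_dist K_gt_1] by (rule order_trans)
  show "integrable marginal (\<lambda>x. cond_risk_L K (cond_dist x) (G x))"
    using meas nonneg finite by (intro integrableI_nonneg) (auto simp: risk_L_eq[OF G] less_top)
  show "enn2real (risk_L D K G) = (\<integral>x. cond_risk_L K (cond_dist x) (G x) \<partial>marginal)"
    using meas nonneg by (simp add: risk_L_eq[OF G] integral_eq_nn_integral)
qed

lemma integrable_cond_entropy:
  assumes G: "\<And>j. (\<lambda>x. G x j) \<in> borel_measurable Xs" and finite: "risk_L D K G \<noteq> \<infinity>"
  shows "integrable marginal (\<lambda>x. cond_entropy K (cond_dist x))"
proof (rule Bochner_Integration.integrable_bound[OF integrable_cond_risk_L[OF G finite]])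
  show "(\<lambda>x. cond_entropy K (cond_dist x)) \<in> borel_measurable marginal" by measurable
  show "AE x in marginal. norm (cond_entropy K (cond_dist x)) \<le> norm (cond_risk_L K (cond_dist x) (G x))"
  proof (rule AE_I2)
    fix x
    have "0 \<le> cond_entropy K (cond_dist x)" "cond_entropy K (cond_dist x) \<le> cond_risk_L K (cond_dist x) (G x)"
      using cond_entropy_nonneg cond_entropy_le_cond_risk_L K_gt_1 label_dist_cond_dist by auto
    then show "norm (cond_entropy K (cond_dist x)) \<le> norm (cond_risk_L K (cond_dist x) (G x))" by simp
  qed
qed

lemma enn2real_risk_L_star_le:
  assumes "integrable marginal (\<lambda>x. cond_entropy K (cond_dist x))"
  shows "enn2real (risk_L_star Xs D K) \<le> (\<integral>x. cond_entropy K (cond_dist x) \<partial>marginal)"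
proof -
  have nonneg: "0 \<le> cond_entropy K (cond_dist x)" for x
    using label_dist_cond_dist by (rule cond_entropy_nonneg)
  have "risk_L_star Xs D K \<le> (\<integral>\<^sup>+x. ennreal (cond_entropy K (cond_dist x)) \<partial>marginal)"
    by (rule risk_L_star_le)
  also have "\<dots> = ennreal (\<integral>x. cond_entropy K (cond_dist x) \<partial>marginal)"
    using assms nonneg by (intro nn_integral_eq_integral) auto
  finally show ?thesis
    using nonneg by (intro enn2real_leI integral_nonneg_AE) auto
qed

lemma
  assumes G: "\<And>j. (\<lambda>x. G x j) \<in> borel_measurable Xs" and finite: "risk_L D K G \<noteq> \<infinity>"
  shows integrable_sqrt_cond_excess_L: "integrable marginal (\<lambda>x. sqrt (2 * cond_excess_L G x))"
    and integral_sqrt_cond_excess_L_le: "(\<integral>x. sqrt (2 * cond_excess_L G x) \<partial>marginal)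
      \<le> sqrt (2 * (enn2real (risk_L D K G) - enn2real (risk_L_star Xs D K)))"
proof -
  note C = integrable_cond_risk_L[OF G finite] and H = integrable_cond_entropy[OF G finite]
  have excess_int: "integrable marginal (\<lambda>x. 2 * cond_excess_L G x)"
    using C H by (simp add: cond_excess_L_def)
  have excess_nonneg: "AE x in marginal. 0 \<le> 2 * cond_excess_L G x"
    using cond_entropy_le_cond_risk_L[OF label_dist_cond_dist K_gt_1]
    by (intro AE_I2) (simp add: cond_excess_L_def)
  show "integrable marginal (\<lambda>x. sqrt (2 * cond_excess_L G x))"
    using excess_int excess_nonneg by (rule marginal.integrable_sqrt)
  have "(\<integral>x. 2 * cond_excess_L G x \<partial>marginal) \<le> 2 * (enn2real (risk_L D K G) - enn2real (risk_L_star Xs D K))"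
    using C H enn2real_risk_L_star_le[OF H]
    by (simp add: cond_excess_L_def enn2real_risk_L[OF G finite])
  then have "sqrt (\<integral>x. 2 * cond_excess_L G x \<partial>marginal)
      \<le> sqrt (2 * (enn2real (risk_L D K G) - enn2real (risk_L_star Xs D K)))"
    by (rule real_sqrt_le_mono)
  with marginal.expectation_sqrt_le[OF excess_int excess_nonneg]
  show "(\<integral>x. sqrt (2 * cond_excess_L G x) \<partial>marginal)
      \<le> sqrt (2 * (enn2real (risk_L D K G) - enn2real (risk_L_star Xs D K)))"
    by linarith
qed

lemma risk_defer_excess_le:
  assumes f: "f \<in> Xs \<rightarrow>\<^sub>M count_space UNIV" and b: "b \<in> borel_measurable Xs"
    and b_bounds: "\<And>x. 0 \<le> b x \<and> b x \<le> 1" and bayes: "(\<integral>x. b x \<partial>marginal) \<le> R"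
    and s: "integrable marginal s" and le: "\<And>x. cond_risk_defer K (cond_dist x) (f x) - b x \<le> s x"
  shows "risk_defer D f - R \<le> (\<integral>x. s x \<partial>marginal)"
proof -
  have "integrable marginal b"
    using b b_bounds by (intro marginal.integrable_const_bound[where B = 1] AE_I2) auto
  have "risk_defer D f - R \<le> (\<integral>x. cond_risk_defer K (cond_dist x) (f x) \<partial>marginal) - (\<integral>x. b x \<partial>marginal)"
    using bayes by (simp add: risk_defer_eq[OF f])
  also have "\<dots> = (\<integral>x. cond_risk_defer K (cond_dist x) (f x) - b x \<partial>marginal)"
    using integrable_cond_risk_defer[OF f] \<open>integrable marginal b\<close> by simp
  also have "\<dots> \<le> (\<integral>x. s x \<partial>marginal)"
    using integrable_cond_risk_defer[OF f] \<open>integrable marginal b\<close> s le by (intro integral_mono) auto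
  finally show ?thesis .
qed

lemma excess_risk01_le:
  assumes G: "\<And>j. (\<lambda>x. G x j) \<in> borel_measurable Xs" and finite: "risk_L D K G \<noteq> \<infinity>"
  shows "risk01 D (\<lambda>x. argmaxK K (G x)) - risk01_star Xs D K
    \<le> (\<integral>x. sqrt (2 * cond_excess_L G x) \<partial>marginal)"
  unfolding risk01_eq_risk_defer
proof (rule risk_defer_excess_le[OF _ _ _ risk01_star_ge integrable_sqrt_cond_excess_L[OF G finite]])
  show "(\<lambda>x. Some (argmaxK K (G x))) \<in> Xs \<rightarrow>\<^sub>M count_space UNIV"
    using measurable_compose[OF measurable_argmaxK_scores[OF G] measurable_count_space] .
  show "(\<lambda>x. 1 - max_class_prob K (cond_dist x)) \<in> borel_measurable Xs" by measurable
  show "0 \<le> 1 - max_class_prob K (cond_dist x) \<and> 1 - max_class_prob K (cond_dist x) \<le> 1" for x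
    using max_class_prob_bounds[OF label_dist_cond_dist] K_gt_1 by simp
  show "cond_risk_defer K (cond_dist x) (Some (argmaxK K (G x))) - (1 - max_class_prob K (cond_dist x))
      \<le> sqrt (2 * cond_excess_L G x)" for x
    unfolding cond_excess_L_def using label_dist_cond_dist K_gt_1 by (rule cond_excess_risk01_le)
qed

lemma excess_risk_defer_le:
  assumes G: "\<And>j. (\<lambda>x. G x j) \<in> borel_measurable Xs" and finite: "risk_L D K G \<noteq> \<infinity>"
  shows "risk_defer D (\<lambda>x. phi K (G x)) - risk_defer_star Xs D K
    \<le> (\<integral>x. sqrt (2 * cond_excess_L G x) \<partial>marginal)"
proof (rule risk_defer_excess_le[OF _ _ _ risk_defer_star_ge integrable_sqrt_cond_excess_L[OF G finite]])
  show "(\<lambda>x. phi K (G x)) \<in> Xs \<rightarrow>\<^sub>M count_space UNIV"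
    using G by (rule measurable_phi_scores)
  show "(\<lambda>x. min (1 - expert_acc K (cond_dist x)) (1 - max_class_prob K (cond_dist x))) \<in> borel_measurable Xs"
    by measurable
  show "0 \<le> min (1 - expert_acc K (cond_dist x)) (1 - max_class_prob K (cond_dist x))
      \<and> min (1 - expert_acc K (cond_dist x)) (1 - max_class_prob K (cond_dist x)) \<le> 1" for x
    using max_class_prob_bounds[OF label_dist_cond_dist] expert_acc_bounds[OF label_dist_cond_dist] K_gt_1
    by (auto simp: min_def)
  show "cond_risk_defer K (cond_dist x) (phi K (G x))
      - min (1 - expert_acc K (cond_dist x)) (1 - max_class_prob K (cond_dist x))
      \<le> sqrt (2 * cond_excess_L G x)" for x
    unfolding cond_excess_L_def using label_dist_cond_dist K_gt_1 by (rule cond_excess_risk_defer_le)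
qed

text \<open>The scores \<open>g\<close> are only assumed measurable in the coordinates \<open>1..K+1\<close>, which are the only
  ones the risks look at; all other coordinates are replaced by \<open>undefined\<close>.\<close>

lemma excess_risks_le:
  assumes g: "g \<in> meas_scores Xs K" and finite: "risk_L D K g \<noteq> \<infinity>"
  shows "max (risk01 D (\<lambda>x. argmaxK K (g x)) - risk01_star Xs D K)
             (risk_defer D (\<lambda>x. phi K (g x)) - risk_defer_star Xs D K)
           \<le> sqrt (2 * (enn2real (risk_L D K g) - enn2real (risk_L_star Xs D K)))"
proof -
  define G where "G x = restrict (g x) {1..K+1}" for x
  have G: "(\<lambda>x. G x j) \<in> borel_measurable Xs" for j
    using g by (cases "j \<in> {1..K+1}") (auto simp: G_def meas_scores_def)
  have agree: "j \<in> {1..K+1} \<Longrightarrow> G x j = g x j" for x j by (simp add: G_def)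
  then have "L_psi K (G x) y m = L_psi K (g x) y m" if "y \<in> {1..K}" for x y m
    using that by (rule L_psi_cong)
  then have risk_L_G: "risk_L D K G = risk_L D K g"
    unfolding risk_L_def by (intro nn_integral_cong) (auto simp: space_D)
  have finite_G: "risk_L D K G \<noteq> \<infinity>" using finite by (simp add: risk_L_G)
  note integral_le = integral_sqrt_cond_excess_L_le[of G, OF G finite_G]
  have "risk01 D (\<lambda>x. argmaxK K (G x)) - risk01_star Xs D K
      \<le> sqrt (2 * (enn2real (risk_L D K G) - enn2real (risk_L_star Xs D K)))"
    using excess_risk01_le[of G, OF G finite_G] integral_le by (rule order_trans)
  moreover have "risk_defer D (\<lambda>x. phi K (G x)) - risk_defer_star Xs D K
      \<le> sqrt (2 * (enn2real (risk_L D K G) - enn2real (risk_L_star Xs D K)))"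
    using excess_risk_defer_le[of G, OF G finite_G] integral_le by (rule order_trans)
  moreover have "argmaxK K (G x) = argmaxK K (g x)" "phi K (G x) = phi K (g x)" for x
    using agree by (auto intro: argmaxK_cong phi_cong)
  ultimately show ?thesis by (simp add: risk_L_G)
qed

end

lemma deferral_problemI:
  assumes "1 < K" "prob_space D"
    and "sets D = sets (Xs \<Otimes>\<^sub>M count_space {1..K} \<Otimes>\<^sub>M count_space {1..K})"
  shows "deferral_problem Xs D K"
proof (intro deferral_problem.intro labelled_prob_space.intro labelled_prob_space_axioms.intro
    deferral_problem_axioms.intro)
  have "count_space {1..K} \<Otimes>\<^sub>M count_space {1..K} = count_space ({1..K} \<times> {1..K})"
    by (intro pair_measure_countable countable_finite) simp_all
  then show "sets D = sets (Xs \<Otimes>\<^sub>M count_space ({1..K} \<times> {1..K}))"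
    using assms(3) by (simp only:)
qed (use assms(1,2) in simp_all)

theorem theorem3:
  fixes Xs :: "'a measure" and D :: "('a \<times> nat \<times> nat) measure"
    and K :: nat and g :: "'a \<Rightarrow> nat \<Rightarrow> real"
  assumes "K > 1"
    and "prob_space D"
    and "sets D = sets (Xs \<Otimes>\<^sub>M count_space {1..K} \<Otimes>\<^sub>M count_space {1..K})"
    and "g \<in> meas_scores Xs K"
  shows "risk_L D K g = \<infinity> \<or>
         max (risk01 D (\<lambda>x. argmaxK K (g x)) - risk01_star Xs D K)
             (risk_defer D (\<lambda>x. phi K (g x)) - risk_defer_star Xs D K)
           \<le> sqrt (2 * (enn2real (risk_L D K g) - enn2real (risk_L_star Xs D K)))"
proof -
  interpret deferral_problem Xs D K
    using assms(1-3) by (rule deferral_problemI)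
  show ?thesis
    using excess_risks_le[OF assms(4)] by blast
qed

end
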